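(* Let $X$ be an $n$-dimensional real Banach space, let $\Sigma$ be an $n$-simplex in $X$ with vertices $a_1,\ldots,a_{n+1}$, and let $c$ be an interior point of $\Sigma$. Then there exists $\delta>0$ such that if $x_1,\ldots,x_{n+1}\in X$ and $\|x_k-a_k\|<\delta$ for each $k\le n+1$, then the convex hull of $x_1,\ldots,x_{n+1}$ is an $n$-simplex with $c$ in its interior.
   Context: The setting is Bishop's constructive mathematics (intuitionistic logic). Vectors $v_1,\ldots,v_n$ are linearly independent if $\|\sum_i\lambda_iv_i\|>0$ whenever $\sum_i|\lambda_i|>0$; points $a_1,\ldots,a_{n+1}$ are affinely independent if $a_k-a_{n+1}$ ($1\le k\le n$) are linearly independent; an $n$-simplex is the convex hull of $n+1$ affinely independent points, called its vertices. An interior point of $S$ is a point $x$ with $\{y:\|y-x\|<r\}\subset S$ for some $r>0$. *)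

theory Defs
  imports "HOL-Analysis.Analysis"
begin

text \<open>Points x 0, ..., x n (paper: x_1..x_{n+1}) are affinely independent as a family:
  pairwise distinct and the set of them is not affinely dependent.\<close>
definition aff_indep_family :: "nat \<Rightarrow> (nat \<Rightarrow> 'a::real_vector) \<Rightarrow> bool" where
  "aff_indep_family n x \<longleftrightarrow> inj_on x {..n} \<and> \<not> affine_dependent (x ` {..n})"

end

theory Submission
  imports Defs
begin

(* Work with barycentric coordinates. Affine independence of a_0, ..., a_n amounts to a bound
   e * (sum_k |u_k|) <= ||sum_k u_k a_k|| for all u with sum_k u_k = 0, with e > 0 coming from
   compactness of the zero-sum l1-sphere. Moving each vertex by at most d lowers e by at most d,
   so nearby families stay affinely independent. As c is interior, all its barycentric
   coordinates are at least some m > 0. In n dimensions every y has barycentric coordinates with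
   respect to the perturbed vertices x_k; for y near c their difference from those of c has zero
   sum and is small by the bound for x, so they stay positive and y lies in the hull of the x_k. *)

lemma inj_on_affine_independent_iff:
  fixes x :: "'i \<Rightarrow> 'a::real_vector"
  assumes "finite I"
  shows "inj_on x I \<and> \<not> affine_dependent (x ` I) \<longleftrightarrow>
         (\<forall>u. sum u I = 0 \<and> (\<Sum>i\<in>I. u i *\<^sub>R x i) = 0 \<longrightarrow> (\<forall>i\<in>I. u i = 0))"
  (is "?lhs \<longleftrightarrow> ?rhs")
proof
  assume ?lhs
  then have inj: "inj_on x I" and indep: "\<not> affine_dependent (x ` I)" by auto
  show ?rhs
  proof (intro allI impI)
    fix u assume u: "sum u I = 0 \<and> (\<Sum>i\<in>I. u i *\<^sub>R x i) = 0"
    define U where "U = u \<circ> the_inv_into I x"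
    have U: "U (x i) = u i" if "i \<in> I" for i
      using inj that by (simp add: U_def the_inv_into_f_f)
    have "sum U (x ` I) = 0" "(\<Sum>v\<in>x ` I. U v *\<^sub>R v) = 0"
      using u by (simp_all add: sum.reindex[OF inj] U cong: sum.cong)
    then have "\<forall>v\<in>x ` I. U v = 0"
      using indep affine_dependent_explicit_finite[of "x ` I"] assms by auto
    then show "\<forall>i\<in>I. u i = 0" using U by auto
  qed
next
  assume rhs: ?rhs
  have "inj_on x I"
  proof (rule inj_onI, rule ccontr)
    fix i j assume ij: "i \<in> I" "j \<in> I" "x i = x j" "i \<noteq> j"
    define u where "u k = (if k = i then 1 else 0) - (if k = j then 1 else (0::real))" for k
    have "sum u I = 0" "(\<Sum>k\<in>I. u k *\<^sub>R x k) = 0"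
      using ij assms
      by (simp_all add: u_def sum_subtractf scaleR_diff_left if_distrib[of "\<lambda>t. t *\<^sub>R _"]
          cong: if_cong)
    then have "u i = 0" using rhs ij by blast
    then show False using ij by (simp add: u_def)
  qed
  moreover have "\<not> affine_dependent (x ` I)"
  proof
    assume "affine_dependent (x ` I)"
    then obtain U where U: "sum U (x ` I) = 0" "(\<Sum>v\<in>x ` I. U v *\<^sub>R v) = 0"
      "\<exists>v\<in>x ` I. U v \<noteq> 0"
      using affine_dependent_explicit_finite[of "x ` I"] assms by auto
    have "sum (U \<circ> x) I = 0" "(\<Sum>i\<in>I. (U \<circ> x) i *\<^sub>R x i) = 0"
      using U(1,2) \<open>inj_on x I\<close> by (simp_all add: sum.reindex)
    then have "\<forall>i\<in>I. U (x i) = 0" using rhs by auto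
    with U(3) show False by blast
  qed
  ultimately show ?lhs by blast
qed

lemma aff_indep_family_iff:
  "aff_indep_family n x \<longleftrightarrow>
   (\<forall>u. sum u {..n} = 0 \<and> (\<Sum>k\<le>n. u k *\<^sub>R x k) = 0 \<longrightarrow> (\<forall>k\<le>n. u k = 0))"
  unfolding aff_indep_family_def by (simp add: inj_on_affine_independent_iff Ball_def)

lemma aff_indep_family_coords_unique:
  assumes "aff_indep_family n x" "sum u {..n} = sum v {..n}"
    and "(\<Sum>k\<le>n. u k *\<^sub>R x k) = (\<Sum>k\<le>n. v k *\<^sub>R x k)" "k \<le> n"
  shows "u k = v k"
proof -
  have "sum (\<lambda>i. u i - v i) {..n} = 0" "(\<Sum>i\<le>n. (u i - v i) *\<^sub>R x i) = 0"
    using assms(2,3) by (simp_all add: sum_subtractf scaleR_diff_left)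
  then show ?thesis using assms(1,4) unfolding aff_indep_family_iff by fastforce
qed

lemma mem_convex_hull_image_iff:
  fixes x :: "'i \<Rightarrow> 'a::real_vector"
  assumes "finite I" "inj_on x I"
  shows "y \<in> convex hull (x ` I) \<longleftrightarrow>
         (\<exists>u. (\<forall>i\<in>I. 0 \<le> u i) \<and> sum u I = 1 \<and> (\<Sum>i\<in>I. u i *\<^sub>R x i) = y)"
proof
  assume "y \<in> convex hull (x ` I)"
  then obtain U
    where "\<forall>v\<in>x ` I. 0 \<le> U v" "sum U (x ` I) = 1" "(\<Sum>v\<in>x ` I. U v *\<^sub>R v) = y"
    using convex_hull_finite[of "x ` I"] assms(1) by auto
  then show "\<exists>u. (\<forall>i\<in>I. 0 \<le> u i) \<and> sum u I = 1 \<and> (\<Sum>i\<in>I. u i *\<^sub>R x i) = y"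
    by (intro exI[of _ "U \<circ> x"]) (simp add: sum.reindex[OF assms(2)])
next
  assume "\<exists>u. (\<forall>i\<in>I. 0 \<le> u i) \<and> sum u I = 1 \<and> (\<Sum>i\<in>I. u i *\<^sub>R x i) = y"
  then show "y \<in> convex hull (x ` I)"
    using convex_sum[OF assms(1) convex_convex_hull, of _ x] by (auto simp: hull_inc)
qed

lemma span_eq_UNIV_if_independent_card:
  fixes B W :: "'a::real_vector set"
  assumes "finite B" "independent B" "span B = UNIV" and "independent W" "card W = card B"
  shows "span W = UNIV"
proof -
  have bound: "finite C \<and> card C \<le> card B" if "independent C" for C :: "'a set"
    using real_vector.independent_span_bound[OF assms(1) that] assms(3) by simp
  have "y \<in> span W" for y
  proof (rule ccontr)
    assume "y \<notin> span W"
    then have "independent (insert y W)" "y \<notin> W"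
      using assms(4) real_vector.independent_insertI real_vector.span_base by auto
    then show False using bound assms(4,5) by fastforce
  qed
  then show ?thesis by blast
qed

lemma affine_hull_eq_UNIV_if_affine_independent_card:
  fixes S B :: "'a::real_vector set"
  assumes "finite B" "independent B" "span B = UNIV"
    and "\<not> affine_dependent S" "card S = Suc (card B)"
  shows "affine hull S = UNIV"
proof -
  obtain p where "p \<in> S" using assms(5) by fastforce
  have "finite S" using assms(5) card.infinite by fastforce
  define E where "E = (\<lambda>x. - p + x) ` (S - {p})"
  have "independent E"
    using affine_dependent_iff_dependent2[OF \<open>p \<in> S\<close>] assms(4) by (simp add: E_def)
  moreover have "card E = card B"
    using \<open>finite S\<close> \<open>p \<in> S\<close> assms(5) unfolding E_def by (simp add: card_image)
  ultimately have "span E = UNIV"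
    using span_eq_UNIV_if_independent_card assms(1-3) by blast
  then have "affine hull (insert p (S - {p})) = range (\<lambda>x. p + x)"
    unfolding affine_hull_insert_span_gen E_def by simp
  also have "insert p (S - {p}) = S" using \<open>p \<in> S\<close> by blast
  finally show ?thesis by (metis add_minus_cancel surj_def)
qed

lemma aff_indep_family_affine_coords:
  fixes x :: "nat \<Rightarrow> 'a::real_vector" and B :: "'a set"
  assumes "finite B" "independent B" "span B = UNIV" "card B = n" and "aff_indep_family n x"
  shows "\<exists>u. sum u {..n} = 1 \<and> (\<Sum>k\<le>n. u k *\<^sub>R x k) = y"
proof -
  have inj: "inj_on x {..n}" and indep: "\<not> affine_dependent (x ` {..n})"
    using assms(5) by (auto simp: aff_indep_family_def)
  have "card (x ` {..n}) = Suc (card B)" using inj assms(4) by (simp add: card_image)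
  then have "affine hull (x ` {..n}) = UNIV"
    by (rule affine_hull_eq_UNIV_if_affine_independent_card[OF assms(1-3) indep])
  then have "y \<in> affine hull (x ` {..n})" by simp
  then obtain U where "sum U (x ` {..n}) = 1" "(\<Sum>v\<in>x ` {..n}. U v *\<^sub>R v) = y"
    unfolding affine_hull_finite[OF finite_imageI[OF finite_atMost]] by blast
  then show ?thesis by (intro exI[of _ "U \<circ> x"]) (simp add: sum.reindex[OF inj])
qed

lemma compact_zero_sum_l1_sphere:
  "compact (PiE UNIV (\<lambda>i. if i \<in> I then {-1..1} else {0}) \<inter>
            {u :: 'i \<Rightarrow> real. sum u I = 0 \<and> (\<Sum>i\<in>I. \<bar>u i\<bar>) = 1})"
proof -
  have "compactin (product_topology (\<lambda>_. euclidean) UNIV)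
          (PiE UNIV (\<lambda>i. if i \<in> I then {-1..1::real} else {0}))"
    by (subst compactin_PiE) auto
  then have "compact (PiE UNIV (\<lambda>i. if i \<in> I then {-1..1::real} else {0}))"
    by (simp add: euclidean_product_topology)
  moreover have "closed {u :: 'i \<Rightarrow> real. sum u I = 0 \<and> (\<Sum>i\<in>I. \<bar>u i\<bar>) = 1}"
    by (intro closed_Collect_conj closed_Collect_eq continuous_intros
        continuous_on_product_coordinates)
  ultimately show ?thesis by (rule compact_Int_closed)
qed

lemma affine_independent_norm_bounded_below_on_sphere:
  fixes x :: "'i \<Rightarrow> 'a::real_normed_vector"
  assumes "finite I"
    and indep: "\<forall>u. sum u I = 0 \<and> (\<Sum>i\<in>I. u i *\<^sub>R x i) = 0 \<longrightarrow> (\<forall>i\<in>I. u i = 0)"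
  shows "\<exists>e>0. \<forall>u. sum u I = 0 \<and> (\<Sum>i\<in>I. \<bar>u i\<bar>) = 1 \<longrightarrow> e \<le> norm (\<Sum>i\<in>I. u i *\<^sub>R x i)"
proof -
  let ?f = "\<lambda>u. norm (\<Sum>i\<in>I. u i *\<^sub>R x i)"
  define S :: "('i \<Rightarrow> real) set"
    where "S = PiE UNIV (\<lambda>i. if i \<in> I then {-1..1} else {0}) \<inter>
               {u. sum u I = 0 \<and> (\<Sum>i\<in>I. \<bar>u i\<bar>) = 1}"
  have "compact S"
    unfolding S_def by (rule compact_zero_sum_l1_sphere)
  obtain e where "e > 0" and e: "\<And>u. u \<in> S \<Longrightarrow> e \<le> ?f u"
  proof (cases "S = {}")
    case True
    then show ?thesis by (intro that[of 1]) auto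
  next
    case False
    have "continuous_on S ?f"
      by (intro continuous_intros)
        (auto intro: continuous_on_subset[OF continuous_on_product_coordinates])
    then obtain u0 where "u0 \<in> S" and min: "\<And>u. u \<in> S \<Longrightarrow> ?f u0 \<le> ?f u"
      using continuous_attains_inf[OF \<open>compact S\<close> False] by blast
    have "?f u0 \<noteq> 0"
    proof
      assume "?f u0 = 0"
      then have "\<forall>i\<in>I. u0 i = 0" using indep \<open>u0 \<in> S\<close> by (simp add: S_def)
      then show False using \<open>u0 \<in> S\<close> by (simp add: S_def)
    qed
    then have "?f u0 > 0" by simp
    then show ?thesis using that min by blast
  qed
  have "e \<le> ?f u" if u: "sum u I = 0" "(\<Sum>i\<in>I. \<bar>u i\<bar>) = 1" for u
  proof -
    define w where "w i = (if i \<in> I then u i else 0)" for i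
    have "- 1 \<le> u i \<and> u i \<le> 1" if "i \<in> I" for i
      using member_le_sum[of i I "\<lambda>i. \<bar>u i\<bar>"] assms(1) u(2) that
      by (simp add: abs_le_iff minus_le_iff)
    then have "w i \<in> (if i \<in> I then {-1..1} else {0})" for i
      by (simp add: w_def)
    then have "w \<in> PiE UNIV (\<lambda>i. if i \<in> I then {-1..1} else {0})" by blast
    moreover have "sum w I = sum u I" "(\<Sum>i\<in>I. \<bar>w i\<bar>) = (\<Sum>i\<in>I. \<bar>u i\<bar>)"
      and fw: "(\<Sum>i\<in>I. w i *\<^sub>R x i) = (\<Sum>i\<in>I. u i *\<^sub>R x i)"
      by (auto simp: w_def intro!: sum.cong)
    ultimately have "w \<in> S" using u by (simp add: S_def)
    then show ?thesis using e fw by metis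
  qed
  then show ?thesis using \<open>e > 0\<close> by blast
qed

lemma affine_independent_iff_norm_lower_bound:
  fixes x :: "'i \<Rightarrow> 'a::real_normed_vector"
  assumes "finite I"
  shows "(\<forall>u. sum u I = 0 \<and> (\<Sum>i\<in>I. u i *\<^sub>R x i) = 0 \<longrightarrow> (\<forall>i\<in>I. u i = 0)) \<longleftrightarrow>
         (\<exists>e>0. \<forall>u. sum u I = 0 \<longrightarrow> e * (\<Sum>i\<in>I. \<bar>u i\<bar>) \<le> norm (\<Sum>i\<in>I. u i *\<^sub>R x i))"
  (is "?indep \<longleftrightarrow> ?bound")
proof
  assume ?bound
  then obtain e where "e > 0"
    and e: "\<And>u. sum u I = 0 \<Longrightarrow> e * (\<Sum>i\<in>I. \<bar>u i\<bar>) \<le> norm (\<Sum>i\<in>I. u i *\<^sub>R x i)"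
    by blast
  show ?indep
  proof (intro allI impI)
    fix u assume u: "sum u I = 0 \<and> (\<Sum>i\<in>I. u i *\<^sub>R x i) = 0"
    then have "e * (\<Sum>i\<in>I. \<bar>u i\<bar>) \<le> 0" using e[of u] by simp
    then have "(\<Sum>i\<in>I. \<bar>u i\<bar>) = 0"
      using \<open>e > 0\<close> by (simp add: mult_le_0_iff antisym sum_nonneg)
    then show "\<forall>i\<in>I. u i = 0" using assms by (simp add: sum_nonneg_eq_0_iff)
  qed
next
  assume ?indep
  then obtain e where "e > 0" and e: "\<And>u. sum u I = 0 \<Longrightarrow> (\<Sum>i\<in>I. \<bar>u i\<bar>) = 1 \<Longrightarrow>
      e \<le> norm (\<Sum>i\<in>I. u i *\<^sub>R x i)"
    using affine_independent_norm_bounded_below_on_sphere[OF assms] by blast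
  have "e * s \<le> norm (\<Sum>i\<in>I. u i *\<^sub>R x i)"
    if "sum u I = 0" "s = (\<Sum>i\<in>I. \<bar>u i\<bar>)" for u s
  proof (cases "s = 0")
    case False
    then have "s > 0" using that(2) by (simp add: sum_nonneg order_le_neq_trans)
    have "sum (\<lambda>i. u i / s) I = 0" "(\<Sum>i\<in>I. \<bar>u i / s\<bar>) = 1"
      using that \<open>s > 0\<close> by (simp_all add: sum_divide_distrib[symmetric])
    then have "e \<le> norm (\<Sum>i\<in>I. (u i / s) *\<^sub>R x i)" by (rule e)
    also have "(\<Sum>i\<in>I. (u i / s) *\<^sub>R x i) = (1 / s) *\<^sub>R (\<Sum>i\<in>I. u i *\<^sub>R x i)"
      by (simp add: scaleR_sum_right)
    finally show ?thesis using \<open>s > 0\<close> by (simp add: field_simps)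
  qed simp
  then show ?bound using \<open>e > 0\<close> by blast
qed

lemma aff_indep_family_iff_norm_lower_bound:
  fixes x :: "nat \<Rightarrow> 'a::real_normed_vector"
  shows "aff_indep_family n x \<longleftrightarrow>
         (\<exists>e>0. \<forall>u. sum u {..n} = 0 \<longrightarrow> e * (\<Sum>k\<le>n. \<bar>u k\<bar>) \<le> norm (\<Sum>k\<le>n. u k *\<^sub>R x k))"
  unfolding aff_indep_family_def inj_on_affine_independent_iff[OF finite_atMost]
  by (rule affine_independent_iff_norm_lower_bound[OF finite_atMost])

lemma norm_lower_bound_perturb:
  fixes x y :: "'i \<Rightarrow> 'a::real_normed_vector"
  assumes "e * (\<Sum>i\<in>I. \<bar>u i\<bar>) \<le> norm (\<Sum>i\<in>I. u i *\<^sub>R x i)"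
    and "\<And>i. i \<in> I \<Longrightarrow> norm (y i - x i) \<le> d"
  shows "(e - d) * (\<Sum>i\<in>I. \<bar>u i\<bar>) \<le> norm (\<Sum>i\<in>I. u i *\<^sub>R y i)"
proof -
  have "norm (\<Sum>i\<in>I. u i *\<^sub>R (y i - x i)) \<le> (\<Sum>i\<in>I. \<bar>u i\<bar> * d)"
    using assms(2) by (intro order.trans[OF norm_sum] sum_mono) (simp add: mult_left_mono)
  also have "\<dots> = d * (\<Sum>i\<in>I. \<bar>u i\<bar>)"
    by (simp add: sum_distrib_left mult.commute)
  moreover have "norm (\<Sum>i\<in>I. u i *\<^sub>R x i) \<le>
      norm (\<Sum>i\<in>I. u i *\<^sub>R y i) + norm (\<Sum>i\<in>I. u i *\<^sub>R (y i - x i))"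
    using norm_triangle_ineq4[of "\<Sum>i\<in>I. u i *\<^sub>R y i" "\<Sum>i\<in>I. u i *\<^sub>R (y i - x i)"]
    by (simp add: scaleR_diff_right sum_subtractf)
  ultimately show ?thesis using assms(1) by (simp add: left_diff_distrib)
qed

lemma interior_barycentric_coords_bounded_below:
  fixes a :: "nat \<Rightarrow> 'a::real_normed_vector"
  assumes simplex: "aff_indep_family n a" and c: "c \<in> interior (convex hull (a ` {..n}))"
  shows "\<exists>m>0. \<exists>\<mu>. (\<forall>k\<le>n. m \<le> \<mu> k) \<and> sum \<mu> {..n} = 1 \<and> (\<Sum>k\<le>n. \<mu> k *\<^sub>R a k) = c"
proof -
  have inj: "inj_on a {..n}" using simplex by (simp add: aff_indep_family_def)
  note hull_iff = mem_convex_hull_image_iff[OF finite_atMost inj]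
  obtain r where "r > 0" and r: "ball c r \<subseteq> convex hull (a ` {..n})"
    using c mem_interior by blast
  obtain \<mu> where \<mu>: "sum \<mu> {..n} = 1" "(\<Sum>k\<le>n. \<mu> k *\<^sub>R a k) = c"
    using c interior_subset hull_iff by blast
  have "0 < 1 + (\<Sum>k\<le>n. norm (c - a k))" by (simp add: add_pos_nonneg sum_nonneg)
  define s where "s = r / (1 + (\<Sum>k\<le>n. norm (c - a k)))"
  have "s > 0" using \<open>r > 0\<close> \<open>0 < 1 + _\<close> by (simp add: s_def)
  have "s / (1 + s) \<le> \<mu> k" if "k \<le> n" for k
  proof -
    (* c + s (c - a_k) lies in the simplex and has k-th coordinate (1 + s) \<mu>_k - s *)
    have "norm (c - a k) \<le> (\<Sum>k\<le>n. norm (c - a k))"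
      using that by (intro member_le_sum) auto
    then have "s * norm (c - a k) < s * (1 + (\<Sum>k\<le>n. norm (c - a k)))"
      using \<open>s > 0\<close> by simp
    also have "\<dots> = r" using \<open>0 < 1 + _\<close> by (simp add: s_def)
    finally have "s * norm (c - a k) < r" .
    then have "c + s *\<^sub>R (c - a k) \<in> convex hull (a ` {..n})"
      using r \<open>s > 0\<close> by (auto simp: dist_norm)
    then obtain \<nu> where \<nu>: "\<forall>i\<le>n. 0 \<le> \<nu> i" "sum \<nu> {..n} = 1"
      "(\<Sum>i\<le>n. \<nu> i *\<^sub>R a i) = c + s *\<^sub>R (c - a k)"
      using hull_iff by auto
    define \<mu>' where "\<mu>' i = (1 + s) * \<mu> i - (if i = k then s else 0)" for i
    have sum: "sum \<mu>' {..n} = 1"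
      using \<mu>(1) that by (simp add: \<mu>'_def sum_subtractf flip: sum_distrib_left)
    have "(\<Sum>i\<le>n. \<mu>' i *\<^sub>R a i) = (1 + s) *\<^sub>R (\<Sum>i\<le>n. \<mu> i *\<^sub>R a i) - s *\<^sub>R a k"
      using that by (simp add: \<mu>'_def scaleR_diff_left sum_subtractf scaleR_sum_right
          if_distrib[of "\<lambda>t. t *\<^sub>R _"] cong: if_cong)
    also have "\<dots> = c + s *\<^sub>R (c - a k)"
      using \<mu>(2) by (simp add: algebra_simps)
    finally have "\<nu> k = \<mu>' k"
      using aff_indep_family_coords_unique[OF simplex, of \<nu> \<mu>' k] \<nu>(2,3) sum that by simp
    moreover have "0 \<le> \<nu> k" using \<nu>(1) that by simp
    ultimately show ?thesis using \<open>s > 0\<close> by (simp add: \<mu>'_def field_simps)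
  qed
  then show ?thesis using \<open>s > 0\<close> \<mu> by (intro exI[of _ "s / (1 + s)"]) auto
qed

lemma ball_subset_convex_hull_of_near_simplex:
  fixes a x :: "nat \<Rightarrow> 'a::real_normed_vector" and B :: "'a set"
  assumes "finite B" "independent B" "span B = UNIV" "card B = n"
    and indep: "aff_indep_family n x"
    and lower: "\<forall>u. sum u {..n} = 0 \<longrightarrow> e * (\<Sum>k\<le>n. \<bar>u k\<bar>) \<le> norm (\<Sum>k\<le>n. u k *\<^sub>R x k)"
    and near: "\<forall>k\<le>n. norm (x k - a k) \<le> d"
    and \<mu>: "\<forall>k\<le>n. m \<le> \<mu> k" "sum \<mu> {..n} = 1" "(\<Sum>k\<le>n. \<mu> k *\<^sub>R a k) = c"
    and "0 < m" "0 < e" "r + d \<le> e * m"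
  shows "ball c r \<subseteq> convex hull (x ` {..n})"
proof
  fix y assume "y \<in> ball c r"
  obtain \<nu> where \<nu>: "sum \<nu> {..n} = 1" "(\<Sum>k\<le>n. \<nu> k *\<^sub>R x k) = y"
    using aff_indep_family_affine_coords[OF assms(1-4) indep] by blast
  define u where "u k = \<nu> k - \<mu> k" for k
  have "(\<Sum>k\<le>n. \<mu> k *\<^sub>R (a k - x k)) \<in> cball 0 d"
    using near \<mu>(1,2) \<open>0 < m\<close>
    by (intro convex_sum[OF finite_atMost convex_cball]) (force simp: norm_minus_commute)+
  then have "norm (\<Sum>k\<le>n. \<mu> k *\<^sub>R (a k - x k)) \<le> d" by simp
  moreover have "(\<Sum>k\<le>n. u k *\<^sub>R x k) = (y - c) + (\<Sum>k\<le>n. \<mu> k *\<^sub>R (a k - x k))"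
    using \<nu>(2) \<mu>(3) by (simp add: u_def scaleR_diff_left scaleR_diff_right sum_subtractf)
  then have "norm (\<Sum>k\<le>n. u k *\<^sub>R x k) \<le> norm (y - c) + norm (\<Sum>k\<le>n. \<mu> k *\<^sub>R (a k - x k))"
    by (simp only: norm_triangle_ineq)
  moreover have "norm (y - c) < r"
    using \<open>y \<in> ball c r\<close> by (simp add: dist_norm norm_minus_commute)
  moreover have "sum u {..n} = 0" using \<nu>(1) \<mu>(2) by (simp add: u_def sum_subtractf)
  then have "e * (\<Sum>k\<le>n. \<bar>u k\<bar>) \<le> norm (\<Sum>k\<le>n. u k *\<^sub>R x k)"
    using lower by blast
  ultimately have "e * (\<Sum>k\<le>n. \<bar>u k\<bar>) < e * m"
    using \<open>r + d \<le> e * m\<close> by linarith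
  then have small: "(\<Sum>k\<le>n. \<bar>u k\<bar>) < m" using \<open>0 < e\<close> by simp
  have "0 \<le> \<nu> k" if "k \<le> n" for k
  proof -
    have "\<bar>u k\<bar> \<le> (\<Sum>k\<le>n. \<bar>u k\<bar>)" using that by (intro member_le_sum) auto
    moreover have "m \<le> \<mu> k" using \<mu>(1) that by simp
    ultimately show ?thesis using small abs_ge_minus_self[of "u k"] by (simp add: u_def)
  qed
  moreover have "inj_on x {..n}" using indep by (simp add: aff_indep_family_def)
  ultimately show "y \<in> convex hull (x ` {..n})"
    using \<nu> by (auto simp: mem_convex_hull_image_iff)
qed

theorem corollary30:
  fixes n :: nat and a :: "nat \<Rightarrow> 'a::banach" and c :: 'a
  assumes dimX: "\<exists>B :: 'a set. finite B \<and> independent B \<and> span B = UNIV \<and> card B = n"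
    and simplex: "aff_indep_family n a"
    and interior: "c \<in> interior (convex hull (a ` {..n}))"
  shows "\<exists>\<delta>>0. \<forall>x :: nat \<Rightarrow> 'a. (\<forall>k\<le>n. norm (x k - a k) < \<delta>) \<longrightarrow>
           aff_indep_family n x \<and> c \<in> interior (convex hull (x ` {..n}))"
proof -
  obtain B :: "'a set" where B: "finite B" "independent B" "span B = UNIV" "card B = n"
    using dimX by blast
  obtain e where "e > 0"
    and e: "\<forall>u. sum u {..n} = 0 \<longrightarrow> e * (\<Sum>k\<le>n. \<bar>u k\<bar>) \<le> norm (\<Sum>k\<le>n. u k *\<^sub>R a k)"
    using simplex unfolding aff_indep_family_iff_norm_lower_bound by blast
  obtain m \<mu> where "m > 0"
    and \<mu>: "\<forall>k\<le>n. m \<le> \<mu> k" "sum \<mu> {..n} = 1" "(\<Sum>k\<le>n. \<mu> k *\<^sub>R a k) = c"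
    using interior_barycentric_coords_bounded_below[OF simplex interior] by blast
  have "m \<le> 1"
    using \<mu>(1,2) \<open>m > 0\<close> member_le_sum[of 0 "{..n}" \<mu>] by fastforce
  define \<delta> where "\<delta> = e * m / 4"
  have "\<delta> > 0" using \<open>e > 0\<close> \<open>m > 0\<close> by (simp add: \<delta>_def)
  have "\<delta> \<le> e / 2" using \<open>e > 0\<close> \<open>m \<le> 1\<close> by (simp add: \<delta>_def)
  then have "\<delta> + \<delta> \<le> (e - \<delta>) * m"
    using \<open>m > 0\<close> mult_right_mono[of "e / 2" "e - \<delta>" m] by (simp add: \<delta>_def)
  have "aff_indep_family n x \<and> c \<in> interior (convex hull (x ` {..n}))"
    if "\<forall>k\<le>n. norm (x k - a k) < \<delta>" for x
  proof -
    have near: "\<forall>k\<le>n. norm (x k - a k) \<le> \<delta>" using that by (simp add: less_imp_le)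
    then have lower: "\<forall>u. sum u {..n} = 0 \<longrightarrow>
        (e - \<delta>) * (\<Sum>k\<le>n. \<bar>u k\<bar>) \<le> norm (\<Sum>k\<le>n. u k *\<^sub>R x k)"
      using e by (auto intro!: norm_lower_bound_perturb[where x = a])
    then have indep: "aff_indep_family n x"
      unfolding aff_indep_family_iff_norm_lower_bound using \<open>\<delta> \<le> e / 2\<close> \<open>e > 0\<close>
      by (intro exI[of _ "e - \<delta>"]) auto
    have "ball c \<delta> \<subseteq> convex hull (x ` {..n})"
      using \<open>\<delta> \<le> e / 2\<close> \<open>e > 0\<close> \<open>m > 0\<close> \<open>\<delta> + \<delta> \<le> (e - \<delta>) * m\<close>
      by (intro ball_subset_convex_hull_of_near_simplex[OF B indep lower near \<mu>]) auto
    then show ?thesis using indep \<open>\<delta> > 0\<close> mem_interior by blast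
  qed
  then show ?thesis using \<open>\<delta> > 0\<close> by blast
qed

end
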